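(* For each $q\ge3$ (uniformly in $\xi_\infty\in[0,2\pi)$), $$\xi_q(\varphi_\infty(\xi_\infty))-\xi_\infty=O_{e_0,c}(1/q^2)\qquad\text{and}\qquad k_q-e_0=O_{e_0,c}(1/q^2),$$ where $O_{e_0,c}(X)$ denotes a quantity bounded in absolute value by $X$ times a constant depending only on $e_0$ and $c$.
   Context: Ellipse with semi-axes $0<b\le a$, eccentricity $e_0=\sqrt{1-b^2/a^2}\in[0,1)$, semi-focal distance $c=\sqrt{a^2-b^2}$. For $0\le k<1$, $F(\varphi;k)=\int_0^\varphi(1-k^2\sin^2\tau)^{-1/2}d\tau$, $K(k)=F(\pi/2;k)$, and $\mathrm{am}(\cdot;k)$ is the inverse function of $F(\cdot;k)$ (Jacobi amplitude). For $\lambda\in(0,b)$, $k_\lambda=\sqrt{(a^2-b^2)/(a^2-\lambda^2)}$, $\omega_\lambda=F(\arcsin(\lambda/b);k_\lambda)/(2K(k_\lambda))$ (strictly increasing from $0$ to $1/2$); for $q\ge3$, $\omega_{\lambda_q}=1/q$ and $k_q=k_{\lambda_q}$. Define $\xi_q(\varphi)=\frac{2\pi}{4K(k_q)}F(\varphi;k_q)$ and $\varphi_\infty(\xi)=\mathrm{am}\big(\frac{4K(e_0)}{2\pi}\xi;e_0\big)$. *)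

theory Defs
  imports "HOL-Analysis.Analysis"
begin

definition ellF :: "real \<Rightarrow> real \<Rightarrow> real" where
  "ellF phi k = (if 0 \<le> phi
     then integral {0..phi} (\<lambda>t. 1 / sqrt (1 - k\<^sup>2 * (sin t)\<^sup>2))
     else - integral {phi..0} (\<lambda>t. 1 / sqrt (1 - k\<^sup>2 * (sin t)\<^sup>2)))"

definition ellK :: "real \<Rightarrow> real" where
  "ellK k = ellF (pi / 2) k"

definition jam :: "real \<Rightarrow> real \<Rightarrow> real" where
  "jam u k = (THE phi. ellF phi k = u)"

definition ecc0 :: "real \<Rightarrow> real \<Rightarrow> real" where
  "ecc0 a b = sqrt (1 - b\<^sup>2 / a\<^sup>2)"

definition semifocal :: "real \<Rightarrow> real \<Rightarrow> real" where
  "semifocal a b = sqrt (a\<^sup>2 - b\<^sup>2)"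

definition k_lam :: "real \<Rightarrow> real \<Rightarrow> real \<Rightarrow> real" where
  "k_lam a b l = sqrt ((a\<^sup>2 - b\<^sup>2) / (a\<^sup>2 - l\<^sup>2))"

definition omega_lam :: "real \<Rightarrow> real \<Rightarrow> real \<Rightarrow> real" where
  "omega_lam a b l = ellF (arcsin (l / b)) (k_lam a b l) / (2 * ellK (k_lam a b l))"

definition lam_q :: "real \<Rightarrow> real \<Rightarrow> nat \<Rightarrow> real" where
  "lam_q a b q = (THE l. 0 < l \<and> l < b \<and> omega_lam a b l = 1 / real q)"

definition k_q :: "real \<Rightarrow> real \<Rightarrow> nat \<Rightarrow> real" where
  "k_q a b q = k_lam a b (lam_q a b q)"

definition xi_q :: "real \<Rightarrow> real \<Rightarrow> nat \<Rightarrow> real \<Rightarrow> real" where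
  "xi_q a b q phi = 2 * pi / (4 * ellK (k_q a b q)) * ellF phi (k_q a b q)"

definition phi_inf :: "real \<Rightarrow> real \<Rightarrow> real \<Rightarrow> real" where
  "phi_inf a b xi = jam (4 * ellK (ecc0 a b) / (2 * pi) * xi) (ecc0 a b)"

end

theory Submission
  imports Defs
begin

text \<open>Write \<open>F(\<phi>;k) = \<integral>\<^sub>0\<^sup>\<phi> (1 - k\<^sup>2 sin\<^sup>2 t)\<^sup>-\<^sup>1\<^sup>/\<^sup>2 dt\<close>. The addition formula for
  complementary amplitudes turns \<open>\<omega>\<^sub>\<lambda>\<close> into \<open>(1 - F(\<psi>\<^sub>\<lambda>;k\<^sub>\<lambda>)/K(k\<^sub>\<lambda>))/2\<close> with
  \<open>tan \<psi>\<^sub>\<lambda> = \<surd>(a\<^sup>2 - \<lambda>\<^sup>2)/\<lambda>\<close>. Since \<open>F(\<psi>;k)/K(k)\<close> decreases in \<open>k\<close> and \<open>\<psi>\<^sub>\<lambda>\<close> decreases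
  in \<open>\<lambda>\<close>, \<open>\<omega>\<^sub>\<lambda>\<close> is strictly increasing, and it passes \<open>1/3\<close> because
  \<open>K(k) \<ge> arsinh (\<pi>/(2\<surd>(1 - k\<^sup>2)))\<close> blows up as \<open>\<lambda> \<rightarrow> b\<close>. Hence \<open>\<lambda>\<^sub>q\<close> is well defined and
  \<open>\<lambda>\<^sub>q \<le> \<lambda>\<^sub>3\<close>, so every \<open>k\<^sub>q\<close> lies in \<open>[e\<^sub>0, k\<^sub>\<lambda>\<^sub>3]\<close>, where \<open>F\<close> and \<open>K\<close> are uniformly
  Lipschitz in the modulus. Now \<open>1/q = \<omega>\<^sub>\<lambda>\<^sub>q \<ge> (\<lambda>\<^sub>q/b)/(2K)\<close> gives \<open>\<lambda>\<^sub>q = O(1/q)\<close>, and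
  \<open>k\<^sub>q\<^sup>2 - e\<^sub>0\<^sup>2 \<le> \<lambda>\<^sub>q\<^sup>2/a\<^sup>2\<close> gives \<open>k\<^sub>q - e\<^sub>0 = O(1/q\<^sup>2)\<close>. Finally, with \<open>\<phi> = \<phi>\<^sub>\<infinity>(\<xi>)\<close>,
  \<open>\<xi>\<^sub>q(\<phi>) - \<xi> = (\<pi>/2)(F(\<phi>;k\<^sub>q)/K(k\<^sub>q) - F(\<phi>;e\<^sub>0)/K(e\<^sub>0))\<close>, which is \<open>O(k\<^sub>q - e\<^sub>0)\<close>.
  For \<open>e\<^sub>0 > 0\<close> the pair \<open>(e\<^sub>0, c)\<close> determines the ellipse; for \<open>e\<^sub>0 = 0\<close> both differences
  vanish.\<close>

definition ell_integrand :: "real \<Rightarrow> real \<Rightarrow> real" where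
  "ell_integrand k t = 1 / sqrt (1 - k\<^sup>2 * (sin t)\<^sup>2)"

definition ellint :: "real \<Rightarrow> real \<Rightarrow> real" where
  "ellint k x = integral {0..x} (ell_integrand k)"

definition K_bound :: "real \<Rightarrow> real" where
  "K_bound \<kappa> = pi / 2 / sqrt (1 - \<kappa>\<^sup>2)"

definition ell_lipschitz_const :: "real \<Rightarrow> real" where
  "ell_lipschitz_const \<kappa> = 1 / ((1 - \<kappa>\<^sup>2) * sqrt (1 - \<kappa>\<^sup>2))"

lemma one_minus_square_pos:
  fixes \<kappa> :: real assumes "0 \<le> \<kappa>" "\<kappa> < 1" shows "0 < 1 - \<kappa>\<^sup>2"
  using assms by (simp add: abs_square_less_1)

lemma sin_square_le_1: "(sin (t::real))\<^sup>2 \<le> 1"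
  using abs_sin_le_one[of t] abs_square_le_1 by blast

lemma sin_square_mono:
  fixes s t :: real assumes "0 \<le> s" "s \<le> t" "t \<le> pi/2"
  shows "(sin s)\<^sup>2 \<le> (sin t)\<^sup>2"
  using assms by (intro power_mono sin_monotone_2pi_le sin_ge_zero) auto

lemma ell_radicand_ge:
  fixes k \<kappa> t :: real assumes "0 \<le> k" "k \<le> \<kappa>"
  shows "1 - \<kappa>\<^sup>2 \<le> 1 - k\<^sup>2 * (sin t)\<^sup>2"
proof -
  have "k\<^sup>2 * (sin t)\<^sup>2 \<le> k\<^sup>2" using sin_square_le_1[of t] by (simp add: mult_left_le)
  moreover have "k\<^sup>2 \<le> \<kappa>\<^sup>2" using assms by (intro power_mono) auto
  ultimately show ?thesis by linarith
qed

lemma ell_radicand_pos: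
  fixes k t :: real assumes "0 \<le> k" "k < 1" shows "0 < 1 - k\<^sup>2 * (sin t)\<^sup>2"
  using ell_radicand_ge[of k k t] one_minus_square_pos[OF assms] assms by linarith

lemma continuous_on_ell_integrand:
  fixes k :: real assumes "0 \<le> k" "k < 1" shows "continuous_on S (ell_integrand k)"
  unfolding ell_integrand_def using ell_radicand_pos[OF assms]
  by (intro continuous_intros) (auto simp: less_imp_neq[symmetric])

lemma ell_integrand_integrable:
  fixes k :: real assumes "0 \<le> k" "k < 1" shows "ell_integrand k integrable_on {x..y}"
  by (rule integrable_continuous_interval[OF continuous_on_ell_integrand[OF assms]])

lemma ell_integrand_ge_1:
  fixes k :: real assumes "0 \<le> k" "k < 1" shows "1 \<le> ell_integrand k t"
  unfolding ell_integrand_def using ell_radicand_pos[OF assms, of t] by simp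

lemma ell_integrand_le:
  fixes k \<kappa> :: real assumes "0 \<le> k" "k \<le> \<kappa>" "\<kappa> < 1"
  shows "ell_integrand k t \<le> 1 / sqrt (1 - \<kappa>\<^sup>2)"
  unfolding ell_integrand_def
  using ell_radicand_ge[OF assms(1,2), of t] one_minus_square_pos[of \<kappa>] assms
  by (simp add: divide_simps)

lemma ell_integrand_mono:
  fixes k s t :: real assumes "0 \<le> k" "k < 1" "0 \<le> s" "s \<le> t" "t \<le> pi/2"
  shows "ell_integrand k s \<le> ell_integrand k t"
proof -
  have "k\<^sup>2 * (sin s)\<^sup>2 \<le> k\<^sup>2 * (sin t)\<^sup>2"
    using sin_square_mono[OF assms(3-5)] by (simp add: mult_left_mono)
  thus ?thesis unfolding ell_integrand_def
    using ell_radicand_pos[OF assms(1,2), of t] ell_radicand_pos[OF assms(1,2), of s]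
    by (simp add: divide_simps)
qed

lemma inverse_sqrt_diff_le:
  fixes A B m :: real assumes "0 < m" "m \<le> sqrt A" "m \<le> sqrt B"
  shows "\<bar>1 / sqrt A - 1 / sqrt B\<bar> \<le> \<bar>B - A\<bar> / (2 * m ^ 3)"
proof -
  have A: "0 < sqrt A" and B: "0 < sqrt B" using assms by linarith+
  have "B - A = (sqrt B - sqrt A) * (sqrt A + sqrt B)" using A B by (simp add: algebra_simps)
  moreover have "0 < sqrt A + sqrt B" using A B by linarith
  ultimately have "sqrt B - sqrt A = (B - A) / (sqrt A + sqrt B)" by (simp add: eq_divide_eq)
  moreover have "1 / sqrt A - 1 / sqrt B = (sqrt B - sqrt A) / (sqrt A * sqrt B)"
    using A B by (simp add: field_simps)
  ultimately have "1 / sqrt A - 1 / sqrt B = (B - A) / (sqrt A * sqrt B * (sqrt A + sqrt B))"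
    by simp
  hence "\<bar>1 / sqrt A - 1 / sqrt B\<bar> = \<bar>B - A\<bar> / (sqrt A * sqrt B * (sqrt A + sqrt B))"
    using A B by (simp add: abs_divide abs_mult)
  also have "\<dots> \<le> \<bar>B - A\<bar> / (m * m * (m + m))"
    using assms A B by (intro divide_left_mono mult_mono add_mono) auto
  finally show ?thesis by (simp add: power3_eq_cube algebra_simps)
qed

lemma ell_integrand_lipschitz:
  fixes k1 k2 \<kappa> t :: real assumes "0 \<le> k1" "k1 \<le> \<kappa>" "0 \<le> k2" "k2 \<le> \<kappa>" "\<kappa> < 1"
  shows "\<bar>ell_integrand k1 t - ell_integrand k2 t\<bar> \<le> ell_lipschitz_const \<kappa> * \<bar>k1 - k2\<bar>"
proof -
  define m where "m = sqrt (1 - \<kappa>\<^sup>2)"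
  have m0: "0 < m" unfolding m_def using assms one_minus_square_pos[of \<kappa>] by auto
  have m_le: "m \<le> sqrt (1 - k\<^sup>2 * (sin t)\<^sup>2)" if "0 \<le> k" "k \<le> \<kappa>" for k
    unfolding m_def using ell_radicand_ge[OF that] by simp
  have "(k1 + k2) * (sin t)\<^sup>2 \<le> 2 * 1"
    using assms sin_square_le_1[of t] by (intro mult_mono) auto
  hence "\<bar>k1 - k2\<bar> * ((k1 + k2) * (sin t)\<^sup>2) \<le> \<bar>k1 - k2\<bar> * 2"
    by (intro mult_left_mono) auto
  moreover have "(1 - k2\<^sup>2 * (sin t)\<^sup>2) - (1 - k1\<^sup>2 * (sin t)\<^sup>2) = (k1 - k2) * ((k1 + k2) * (sin t)\<^sup>2)"
    by (simp add: power2_eq_square algebra_simps)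
  ultimately have diff: "\<bar>(1 - k2\<^sup>2 * (sin t)\<^sup>2) - (1 - k1\<^sup>2 * (sin t)\<^sup>2)\<bar> \<le> 2 * \<bar>k1 - k2\<bar>"
    using assms by (simp add: abs_mult)
  have "\<bar>ell_integrand k1 t - ell_integrand k2 t\<bar>
      \<le> \<bar>(1 - k2\<^sup>2 * (sin t)\<^sup>2) - (1 - k1\<^sup>2 * (sin t)\<^sup>2)\<bar> / (2 * m ^ 3)"
    unfolding ell_integrand_def using assms by (intro inverse_sqrt_diff_le m0 m_le) auto
  also have "\<dots> \<le> 2 * \<bar>k1 - k2\<bar> / (2 * m ^ 3)"
    using diff m0 by (intro divide_right_mono) auto
  also have "\<dots> = ell_lipschitz_const \<kappa> * \<bar>k1 - k2\<bar>"
    unfolding ell_lipschitz_const_def m_def using one_minus_square_pos[of \<kappa>] assms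
    by (simp add: power3_eq_cube)
  finally show ?thesis .
qed

lemma integral_ell_integrand_ge:
  fixes k :: real assumes "0 \<le> k" "k < 1" "x \<le> y"
  shows "y - x \<le> integral {x..y} (ell_integrand k)"
proof -
  have "integral {x..y} (\<lambda>_. 1::real) \<le> integral {x..y} (ell_integrand k)"
    using assms by (intro integral_le) (auto simp: ell_integrand_integrable ell_integrand_ge_1)
  thus ?thesis using assms by simp
qed

lemma integral_ell_integrand_le:
  fixes k \<kappa> :: real assumes "0 \<le> k" "k \<le> \<kappa>" "\<kappa> < 1" "x \<le> y"
  shows "integral {x..y} (ell_integrand k) \<le> (y - x) / sqrt (1 - \<kappa>\<^sup>2)"
proof -
  have "integral {x..y} (ell_integrand k) \<le> integral {x..y} (\<lambda>_. 1 / sqrt (1 - \<kappa>\<^sup>2))"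
    using assms by (intro integral_le) (auto simp: ell_integrand_integrable ell_integrand_le)
  thus ?thesis using assms by simp
qed

lemma ellint_0 [simp]: "ellint k 0 = 0"
  unfolding ellint_def by simp

lemma ellint_add:
  fixes k :: real assumes "0 \<le> k" "k < 1" "0 \<le> x" "x \<le> y"
  shows "ellint k y = ellint k x + integral {x..y} (ell_integrand k)"
  unfolding ellint_def
  using Henstock_Kurzweil_Integration.integral_combine[OF assms(3,4) ell_integrand_integrable[OF assms(1,2)]] by simp

lemma ellint_ge:
  fixes k :: real assumes "0 \<le> k" "k < 1" "0 \<le> x" shows "x \<le> ellint k x"
  unfolding ellint_def using integral_ell_integrand_ge[OF assms] by simp

lemma ellint_strict_mono:
  fixes k :: real assumes "0 \<le> k" "k < 1" "0 \<le> x" "x < y"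
  shows "ellint k x < ellint k y"
  using ellint_add[OF assms(1-3), of y] integral_ell_integrand_ge[OF assms(1,2), of x y] assms
  by linarith

lemma ellint_le:
  fixes k \<kappa> :: real assumes "0 \<le> k" "k \<le> \<kappa>" "\<kappa> < 1" "0 \<le> x"
  shows "ellint k x \<le> x / sqrt (1 - \<kappa>\<^sup>2)"
  unfolding ellint_def using integral_ell_integrand_le[OF assms] by simp

lemma ellint_pi_half_ge:
  fixes k :: real assumes "0 \<le> k" "k < 1" shows "pi/2 \<le> ellint k (pi/2)"
  using ellint_ge[OF assms, of "pi/2"] by simp

lemma ellint_pi_half_le:
  fixes k \<kappa> :: real assumes "0 \<le> k" "k \<le> \<kappa>" "\<kappa> < 1"
  shows "ellint k (pi/2) \<le> K_bound \<kappa>"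
  unfolding K_bound_def using ellint_le[OF assms, of "pi/2"] by simp

lemma ellint_le_mul_integrand:
  fixes k :: real assumes "0 \<le> k" "k < 1" "0 \<le> \<psi>" "\<psi> \<le> pi/2"
  shows "ellint k \<psi> \<le> \<psi> * ell_integrand k \<psi>"
proof -
  have "integral {0..\<psi>} (ell_integrand k) \<le> integral {0..\<psi>} (\<lambda>_. ell_integrand k \<psi>)"
    using assms by (intro integral_le) (auto simp: ell_integrand_integrable ell_integrand_mono)
  thus ?thesis unfolding ellint_def using assms by simp
qed

lemma ellint_lipschitz_arg:
  fixes k \<kappa> x y :: real assumes "0 \<le> k" "k \<le> \<kappa>" "\<kappa> < 1" "0 \<le> x" "0 \<le> y"
  shows "\<bar>ellint k y - ellint k x\<bar> \<le> \<bar>y - x\<bar> / sqrt (1 - \<kappa>\<^sup>2)"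
proof -
  have k1: "k < 1" using assms by linarith
  have "\<bar>ellint k v - ellint k u\<bar> \<le> (v - u) / sqrt (1 - \<kappa>\<^sup>2)" if "0 \<le> u" "u \<le> v" for u v
    using ellint_add[OF assms(1) k1 that] integral_ell_integrand_le[OF assms(1-3) that(2)]
      integral_ell_integrand_ge[OF assms(1) k1 that(2)] that by simp
  from this[of x y] this[of y x] assms show ?thesis
    by (cases "x \<le> y") (auto simp: abs_minus_commute)
qed

lemma ellint_lipschitz_modulus:
  fixes k1 k2 \<kappa> x :: real
  assumes "0 \<le> k1" "k1 \<le> \<kappa>" "0 \<le> k2" "k2 \<le> \<kappa>" "\<kappa> < 1" "0 \<le> x"
  shows "\<bar>ellint k1 x - ellint k2 x\<bar> \<le> x * (ell_lipschitz_const \<kappa> * \<bar>k1 - k2\<bar>)"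
proof -
  have int1: "ell_integrand k1 integrable_on {0..x}" and int2: "ell_integrand k2 integrable_on {0..x}"
    using assms by (auto intro!: ell_integrand_integrable)
  have "ellint k1 x - ellint k2 x = integral {0..x} (\<lambda>t. ell_integrand k1 t - ell_integrand k2 t)"
    unfolding ellint_def by (rule integral_diff[OF int1 int2, symmetric])
  also have "\<bar>\<dots>\<bar> \<le> integral {0..x} (\<lambda>_. ell_lipschitz_const \<kappa> * \<bar>k1 - k2\<bar>)"
  proof -
    have int_const: "(\<lambda>_. ell_lipschitz_const \<kappa> * \<bar>k1 - k2\<bar>) integrable_on {0..x}"
      using integrable_const[of "ell_lipschitz_const \<kappa> * \<bar>k1 - k2\<bar>" 0 x] by simp
    show ?thesis using integral_norm_bound_integral[OF integrable_diff[OF int1 int2] int_const]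
        ell_integrand_lipschitz[OF assms(1-5)] by simp
  qed
  also have "\<dots> = x * (ell_lipschitz_const \<kappa> * \<bar>k1 - k2\<bar>)" using assms by simp
  finally show ?thesis .
qed

lemma continuous_on_ellint:
  fixes k :: real assumes "0 \<le> k" "k < 1" shows "continuous_on {0..y} (ellint k)"
  unfolding ellint_def[abs_def]
  by (rule indefinite_integral_continuous_1[OF ell_integrand_integrable[OF assms]])

lemma ellint_has_real_derivative:
  fixes k :: real assumes "0 \<le> k" "k < 1" "0 < x"
  shows "(ellint k has_real_derivative ell_integrand k x) (at x)"
proof -
  have "((\<lambda>u. integral {0..u} (ell_integrand k)) has_vector_derivative ell_integrand k x)
      (at x within {0..x+1})"
    using assms by (intro integral_has_vector_derivative continuous_on_ell_integrand) auto
  moreover have "x \<in> interior {0..x+1}" using assms by simp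
  ultimately show ?thesis unfolding ellint_def[abs_def]
    by (metis at_within_interior has_real_derivative_iff_has_vector_derivative)
qed

lemma continuous_on_ellint_comp:
  fixes S :: "real set" and p k :: "real \<Rightarrow> real" and \<kappa> :: real
  assumes "continuous_on S p" "continuous_on S k" "\<kappa> < 1"
    and bounds: "\<And>x. x \<in> S \<Longrightarrow> 0 \<le> p x \<and> 0 \<le> k x \<and> k x \<le> \<kappa>"
  shows "continuous_on S (\<lambda>x. ellint (k x) (p x))"
  unfolding continuous_on_def
proof
  fix x assume x: "x \<in> S"
  define g where "g y = \<bar>p y - p x\<bar> / sqrt (1 - \<kappa>\<^sup>2) + p x * (ell_lipschitz_const \<kappa> * \<bar>k y - k x\<bar>)" for y
  have "0 < 1 - \<kappa>\<^sup>2" using bounds[OF x] assms(3) by (intro one_minus_square_pos) auto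
  hence "(g \<longlongrightarrow> g x) (at x within S)"
    using assms x unfolding g_def continuous_on_def by (intro tendsto_intros) auto
  hence "(g \<longlongrightarrow> 0) (at x within S)" by (simp add: g_def)
  moreover have "eventually (\<lambda>y. norm (ellint (k y) (p y) - ellint (k x) (p x)) \<le> g y) (at x within S)"
  proof (rule eventually_mono)
    show "eventually (\<lambda>y. y \<in> S) (at x within S)" by (simp add: eventually_at_filter)
  next
    fix y assume y: "y \<in> S"
    have "\<bar>ellint (k y) (p y) - ellint (k y) (p x)\<bar> \<le> \<bar>p y - p x\<bar> / sqrt (1 - \<kappa>\<^sup>2)"
      using bounds[OF x] bounds[OF y] assms(3) by (intro ellint_lipschitz_arg) auto
    moreover have "\<bar>ellint (k y) (p x) - ellint (k x) (p x)\<bar> \<le> p x * (ell_lipschitz_const \<kappa> * \<bar>k y - k x\<bar>)"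
      using bounds[OF x] bounds[OF y] assms(3) by (intro ellint_lipschitz_modulus) auto
    ultimately show "norm (ellint (k y) (p y) - ellint (k x) (p x)) \<le> g y"
      unfolding g_def by simp
  qed
  ultimately show "((\<lambda>x. ellint (k x) (p x)) \<longlongrightarrow> ellint (k x) (p x)) (at x within S)"
    by (rule Lim_null_comparison[THEN LIM_zero_cancel, rotated])
qed

lemma ellF_eq_ellint: "0 \<le> x \<Longrightarrow> ellF x k = ellint k x"
  unfolding ellF_def ellint_def ell_integrand_def by simp

lemma ellK_eq_ellint: "ellK k = ellint k (pi/2)"
  unfolding ellK_def by (simp add: ellF_eq_ellint)

lemma ellF_neg:
  fixes k :: real assumes "0 \<le> k" "k < 1" "x < 0" shows "ellF x k < 0"
  using integral_ell_integrand_ge[OF assms(1,2), of x 0] assms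
  unfolding ellF_def ell_integrand_def[symmetric] by simp

lemma jam_ellint:
  fixes k u :: real assumes "0 \<le> k" "k < 1" "0 \<le> u"
  shows "0 \<le> jam u k" "ellint k (jam u k) = u"
proof -
  obtain p where p: "0 \<le> p" "ellint k p = u"
    using IVT'[of "ellint k" 0 u u] ellint_ge[OF assms] continuous_on_ellint[OF assms(1,2)] assms
    by auto
  have "ellF y k = u \<longleftrightarrow> y = p" for y
  proof
    assume y: "ellF y k = u"
    hence "0 \<le> y" using ellF_neg[OF assms(1,2), of y] assms by force
    thus "y = p" using y p ellF_eq_ellint ellint_strict_mono[OF assms(1,2)]
      by (metis linorder_neqE_linordered_idom order_less_irrefl)
  qed (use p ellF_eq_ellint in simp)
  hence "jam u k = p" unfolding jam_def by simp
  thus "0 \<le> jam u k" "ellint k (jam u k) = u" using p by simp_all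
qed

lemma ell_integrand_cross_mono:
  fixes k1 k2 s t :: real
  assumes "0 \<le> k1" "k1 \<le> k2" "k2 < 1" "(sin s)\<^sup>2 \<le> (sin t)\<^sup>2"
  shows "ell_integrand k2 s * ell_integrand k1 t \<le> ell_integrand k1 s * ell_integrand k2 t"
proof -
  define D :: "real \<Rightarrow> real \<Rightarrow> real" where "D k x = 1 - k\<^sup>2 * (sin x)\<^sup>2" for k x
  have pos: "0 < D k x" if "k \<in> {k1, k2}" for k x
    unfolding D_def using that assms by (intro ell_radicand_pos) auto
  have "k1\<^sup>2 \<le> k2\<^sup>2" using assms by (intro power_mono) auto
  hence "0 \<le> (k2\<^sup>2 - k1\<^sup>2) * ((sin t)\<^sup>2 - (sin s)\<^sup>2)" using assms(4) by simp
  also have "\<dots> = D k2 s * D k1 t - D k1 s * D k2 t" unfolding D_def by (simp add: algebra_simps)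
  finally have "D k1 s * D k2 t \<le> D k2 s * D k1 t" by simp
  thus ?thesis unfolding ell_integrand_def D_def[symmetric]
    using pos[of k1] pos[of k2] by (simp add: divide_simps real_sqrt_mult flip: real_sqrt_mult)
qed

text \<open>By the cross inequality the quotient of the integrands for \<open>k\<^sub>2 \<ge> k\<^sub>1\<close> increases on
  \<open>[0,\<pi>/2]\<close>, so the larger modulus puts relatively more weight on \<open>[\<psi>,\<pi>/2]\<close>.\<close>

lemma ellint_ratio_antimono:
  fixes k1 k2 \<psi> :: real
  assumes "0 \<le> k1" "k1 \<le> k2" "k2 < 1" "0 \<le> \<psi>" "\<psi> \<le> pi/2"
  shows "ellint k2 \<psi> * ellint k1 (pi/2) \<le> ellint k1 \<psi> * ellint k2 (pi/2)"
proof -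
  have k: "k1 < 1" "0 \<le> k2" using assms by linarith+
  define a1 where "a1 = ell_integrand k1 \<psi>"
  define a2 where "a2 = ell_integrand k2 \<psi>"
  define I1 where "I1 = integral {\<psi>..pi/2} (ell_integrand k1)"
  define I2 where "I2 = integral {\<psi>..pi/2} (ell_integrand k2)"
  have a1: "0 < a1" unfolding a1_def using ell_integrand_ge_1[OF assms(1) k(1), of \<psi>] by linarith
  have int: "(\<lambda>s. ell_integrand k s * c) integrable_on {x..y}" if "k \<in> {k1, k2}" for k c x y
    using that assms k
    by (intro integrable_continuous_interval continuous_intros continuous_on_ell_integrand) auto
  have "integral {0..\<psi>} (\<lambda>s. ell_integrand k2 s * a1) \<le> integral {0..\<psi>} (\<lambda>s. ell_integrand k1 s * a2)"
  proof (rule integral_le)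
    fix s assume "s \<in> {0..\<psi>}"
    thus "ell_integrand k2 s * a1 \<le> ell_integrand k1 s * a2"
      unfolding a1_def a2_def using assms by (intro ell_integrand_cross_mono sin_square_mono) auto
  qed (rule int, simp)+
  hence left: "ellint k2 \<psi> * a1 \<le> ellint k1 \<psi> * a2" unfolding ellint_def by simp
  have "integral {\<psi>..pi/2} (\<lambda>s. ell_integrand k1 s * a2) \<le> integral {\<psi>..pi/2} (\<lambda>s. ell_integrand k2 s * a1)"
  proof (rule integral_le)
    fix s assume "s \<in> {\<psi>..pi/2}"
    hence "a2 * ell_integrand k1 s \<le> a1 * ell_integrand k2 s"
      unfolding a1_def a2_def using assms by (intro ell_integrand_cross_mono sin_square_mono) auto
    thus "ell_integrand k1 s * a2 \<le> ell_integrand k2 s * a1" by (simp add: mult.commute)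
  qed (rule int, simp)+
  hence right: "a2 * I1 \<le> a1 * I2" unfolding I1_def I2_def by (simp add: mult.commute)
  have "0 \<le> ellint k1 \<psi>" using ellint_ge[OF assms(1) k(1) assms(4)] assms by linarith
  moreover have "0 \<le> I1" unfolding I1_def using integral_ell_integrand_ge[OF assms(1) k(1) assms(5)]
    assms by linarith
  ultimately have "a1 * (ellint k2 \<psi> * I1) \<le> a1 * (ellint k1 \<psi> * I2)"
    using mult_right_mono[OF left, of I1] mult_left_mono[OF right, of "ellint k1 \<psi>"]
    by (simp add: algebra_simps)
  hence "ellint k2 \<psi> * I1 \<le> ellint k1 \<psi> * I2" using a1 by simp
  moreover have "ellint k1 (pi/2) = ellint k1 \<psi> + I1" "ellint k2 (pi/2) = ellint k2 \<psi> + I2"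
    unfolding I1_def I2_def using ellint_add[OF assms(1) k(1) assms(4,5)]
      ellint_add[OF k(2) assms(3) assms(4,5)] by simp_all
  ultimately show ?thesis by (simp add: algebra_simps)
qed

lemma ell_integrand_complementary_amplitude:
  fixes k x :: real
  assumes "0 \<le> k" "k < 1" "0 < cos x"
  shows "ell_integrand k (pi/2 - arctan (sqrt (1 - k\<^sup>2) * tan x)) *
           (sqrt (1 - k\<^sup>2) * inverse ((cos x)\<^sup>2) / (1 + (sqrt (1 - k\<^sup>2) * tan x)\<^sup>2))
         = ell_integrand k x"
proof -
  define kp where "kp = sqrt (1 - k\<^sup>2)"
  define c where "c = cos x"
  define s where "s = sin x"
  define D where "D = 1 - k\<^sup>2 * s\<^sup>2"
  have kp0: "0 < kp" unfolding kp_def using one_minus_square_pos[OF assms(1,2)] by simp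
  have kp2: "kp\<^sup>2 = 1 - k\<^sup>2" unfolding kp_def using one_minus_square_pos[OF assms(1,2)] by simp
  have c0: "0 < c" unfolding c_def using assms by simp
  have D0: "0 < D" unfolding D_def s_def using ell_radicand_pos[OF assms(1,2)] by simp
  have sc: "s\<^sup>2 + c\<^sup>2 = 1" unfolding s_def c_def by simp
  have tan_sq: "1 + (kp * tan x)\<^sup>2 = D / c\<^sup>2"
  proof -
    have "1 + (kp * tan x)\<^sup>2 = 1 + kp\<^sup>2 * s\<^sup>2 / c\<^sup>2"
      unfolding tan_def s_def c_def by (simp add: power_divide power_mult_distrib)
    also have "\<dots> = (c\<^sup>2 + kp\<^sup>2 * s\<^sup>2) / c\<^sup>2" using c0 by (simp add: field_simps)
    also have "c\<^sup>2 + kp\<^sup>2 * s\<^sup>2 = D" unfolding kp2 D_def using sc by (simp add: algebra_simps)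
    finally show ?thesis .
  qed
  have "sin (pi/2 - arctan (kp * tan x)) = cos (arctan (kp * tan x))" by (simp add: cos_sin_eq)
  hence "(sin (pi/2 - arctan (kp * tan x)))\<^sup>2 = 1 / (1 + (kp * tan x)\<^sup>2)"
    by (simp add: cos_arctan power_divide add_pos_nonneg)
  hence "1 - k\<^sup>2 * (sin (pi/2 - arctan (kp * tan x)))\<^sup>2 = (D - k\<^sup>2 * c\<^sup>2) / D"
    unfolding tan_sq using c0 D0 by (simp add: field_simps)
  also have "D - k\<^sup>2 * c\<^sup>2 = 1 - k\<^sup>2 * (s\<^sup>2 + c\<^sup>2)" unfolding D_def by (simp add: algebra_simps)
  also have "\<dots> = kp\<^sup>2" unfolding sc kp2 by simp
  finally have "ell_integrand k (pi/2 - arctan (kp * tan x)) = sqrt D / kp"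
    unfolding ell_integrand_def using kp0 D0 by (simp add: real_sqrt_divide)
  moreover have "kp * inverse (c\<^sup>2) / (1 + (kp * tan x)\<^sup>2) = kp / D"
    unfolding tan_sq using c0 D0 by (simp add: field_simps)
  moreover have "sqrt D / kp * (kp / D) = 1 / sqrt D" using kp0 D0 by (simp add: field_simps)
  ultimately show ?thesis unfolding kp_def[symmetric] c_def[symmetric] ell_integrand_def D_def s_def
    by simp
qed

lemma ellint_complementary_has_real_derivative:
  fixes k x :: real assumes "0 \<le> k" "k < 1" "0 < x" "x < pi/2"
  shows "((\<lambda>x. ellint k (pi/2 - arctan (sqrt (1 - k\<^sup>2) * tan x)))
           has_real_derivative - ell_integrand k x) (at x)"
proof -
  define kp where "kp = sqrt (1 - k\<^sup>2)"
  define h where "h x = pi/2 - arctan (kp * tan x)" for x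
  define h' where "h' = 0 - inverse (1 + (kp * tan x)\<^sup>2) * (kp * inverse ((cos x)\<^sup>2))"
  have cos: "0 < cos x" using assms by (intro cos_gt_zero_pi) auto
  hence "(tan has_real_derivative inverse ((cos x)\<^sup>2)) (at x)" by (intro DERIV_tan) simp
  from DERIV_chain2[OF DERIV_arctan DERIV_cmult[OF this, of kp]]
  have "(h has_real_derivative h') (at x)" unfolding h_def h'_def by (rule DERIV_diff[OF DERIV_const])
  moreover have "0 < h x" unfolding h_def using arctan_ubound by simp
  ultimately have "((\<lambda>x. ellint k (h x)) has_real_derivative ell_integrand k (h x) * h') (at x)"
    by (intro DERIV_chain2[OF ellint_has_real_derivative[OF assms(1,2)]])
  moreover have "ell_integrand k (h x) * (kp * inverse ((cos x)\<^sup>2) / (1 + (kp * tan x)\<^sup>2))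
      = ell_integrand k x"
    unfolding h_def kp_def using ell_integrand_complementary_amplitude[OF assms(1,2) cos] by simp
  hence "ell_integrand k (h x) * h' = - ell_integrand k x"
    unfolding h'_def by (simp add: divide_inverse algebra_simps)
  ultimately show ?thesis unfolding h_def kp_def by simp
qed

text \<open>The addition formula \<open>F(\<phi>;k) + F(\<psi>;k) = K(k)\<close> for complementary amplitudes
  \<open>tan \<phi> \<cdot> tan \<psi> \<cdot> \<surd>(1 - k\<^sup>2) = 1\<close>.\<close>

lemma ellint_complementary_amplitude:
  fixes k \<psi> :: real assumes "0 \<le> k" "k < 1" "0 \<le> \<psi>" "\<psi> < pi/2"
  shows "ellint k (pi/2 - arctan (sqrt (1 - k\<^sup>2) * tan \<psi>)) + ellint k \<psi> = ellint k (pi/2)"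
proof (cases "\<psi> = 0")
  case False
  hence \<psi>0: "0 < \<psi>" using assms by simp
  define h where "h x = pi/2 - arctan (sqrt (1 - k\<^sup>2) * tan x)" for x
  define \<Phi> where "\<Phi> x = ellint k (h x) + ellint k x" for x
  have h_range: "0 \<le> h x \<and> h x \<le> pi/2" if "0 \<le> x" "x \<le> \<psi>" for x
  proof -
    have "0 \<le> tan x" using that assms tan_gt_zero[of x] by (cases "x = 0") auto
    moreover have "0 \<le> sqrt (1 - k\<^sup>2)" using one_minus_square_pos[OF assms(1,2)] by simp
    ultimately show ?thesis unfolding h_def using arctan_ubound[of "sqrt (1 - k\<^sup>2) * tan x"]
      by (simp add: less_imp_le)
  qed
  have "continuous_on {0..\<psi>} h"
    unfolding h_def using assms by (intro continuous_intros) (auto simp: cos_gt_zero_pi less_imp_neq[symmetric])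
  hence "continuous_on {0..\<psi>} (\<lambda>x. ellint k (h x))"
    using continuous_on_compose2[OF continuous_on_ellint[OF assms(1,2), of "pi/2"]] h_range by force
  hence "continuous_on {0..\<psi>} \<Phi>"
    unfolding \<Phi>_def by (intro continuous_on_add continuous_on_ellint[OF assms(1,2)])
  moreover have "(\<Phi> has_real_derivative 0) (at x)" if "0 < x" "x < \<psi>" for x
  proof -
    have "x < pi/2" using that assms by linarith
    thus ?thesis
      using DERIV_add[OF ellint_complementary_has_real_derivative[OF assms(1,2) that(1)]
          ellint_has_real_derivative[OF assms(1,2) that(1)]]
      unfolding \<Phi>_def[abs_def] h_def by simp
  qed
  ultimately have "\<Phi> \<psi> = \<Phi> 0" by (rule DERIV_isconst_end[OF \<psi>0])
  thus ?thesis unfolding \<Phi>_def h_def by simp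
qed simp

lemma ell_integrand_ge_inverse_sqrt:
  fixes k t :: real assumes "0 \<le> k" "k < 1" "t \<in> {0..pi/2}"
  shows "1 / sqrt ((1 - k\<^sup>2) + (pi/2 - t)\<^sup>2) \<le> ell_integrand k t"
proof -
  have "0 \<le> cos t" using assms by (intro cos_ge_zero) auto
  moreover have "cos t \<le> pi/2 - t" using assms sin_x_le_x[of "pi/2 - t"] by (simp add: sin_cos_eq)
  ultimately have "k\<^sup>2 * (cos t)\<^sup>2 \<le> 1 * (pi/2 - t)\<^sup>2"
    using assms by (intro mult_mono power_mono) (auto simp: abs_square_le_1)
  moreover have "1 - k\<^sup>2 * (sin t)\<^sup>2 = (1 - k\<^sup>2) + k\<^sup>2 * (cos t)\<^sup>2"
    by (simp add: sin_squared_eq algebra_simps)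
  ultimately show ?thesis
    unfolding ell_integrand_def using ell_radicand_pos[OF assms(1,2), of t] by (simp add: divide_simps)
qed

lemma ellint_pi_half_ge_arsinh:
  fixes k :: real assumes "0 \<le> k" "k < 1"
  shows "arsinh (pi/2 / sqrt (1 - k\<^sup>2)) \<le> ellint k (pi/2)"
proof -
  define m where "m = sqrt (1 - k\<^sup>2)"
  have m0: "0 < m" unfolding m_def using one_minus_square_pos[OF assms] by simp
  have m2: "m\<^sup>2 = 1 - k\<^sup>2" unfolding m_def using one_minus_square_pos[OF assms] by simp
  define F where "F t = - arsinh ((pi/2 - t) / m)" for t
  have "(F has_real_derivative 1 / sqrt (m\<^sup>2 + (pi/2 - x)\<^sup>2)) (at x)" for x
  proof -
    have "((pi/2 - x) / m)\<^sup>2 + 1 = (m\<^sup>2 + (pi/2 - x)\<^sup>2) / m\<^sup>2"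
      using m0 by (simp add: power_divide field_simps)
    hence "sqrt (((pi/2 - x) / m)\<^sup>2 + 1) = sqrt (m\<^sup>2 + (pi/2 - x)\<^sup>2) / m"
      using m0 by (simp add: real_sqrt_divide)
    moreover have "((\<lambda>t. (pi/2 - t) / m) has_real_derivative - 1 / m) (at x)"
      using m0 by (auto intro!: derivative_eq_intros)
    from DERIV_minus[OF DERIV_chain2[OF arsinh_real_has_field_derivative this]]
    have "(F has_real_derivative - (1 / sqrt (((pi/2 - x) / m)\<^sup>2 + 1) * (- 1 / m))) (at x)"
      unfolding F_def .
    ultimately show ?thesis using m0 by simp
  qed
  hence "((\<lambda>t. 1 / sqrt (m\<^sup>2 + (pi/2 - t)\<^sup>2)) has_integral (F (pi/2) - F 0)) {0..pi/2}"
    by (intro fundamental_theorem_of_calculus)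
      (auto simp: has_real_derivative_iff_has_vector_derivative has_vector_derivative_at_within)
  moreover have "F (pi/2) - F 0 = arsinh (pi/2 / m)" unfolding F_def by simp
  ultimately have lower: "((\<lambda>t. 1 / sqrt (m\<^sup>2 + (pi/2 - t)\<^sup>2)) has_integral arsinh (pi/2 / m)) {0..pi/2}"
    by simp
  have "arsinh (pi/2 / m) \<le> integral {0..pi/2} (ell_integrand k)"
    using ell_integrand_ge_inverse_sqrt[OF assms] unfolding m2[symmetric]
    by (intro has_integral_le[OF lower integrable_integral[OF ell_integrand_integrable[OF assms]]])
      auto
  thus ?thesis unfolding m_def ellint_def .
qed

context
  fixes a b :: real
  assumes ellipse: "0 < b" "b < a"
begin

lemma semifocal_sq_pos: "0 < a\<^sup>2 - b\<^sup>2"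
  using ellipse by (simp add: power_strict_mono)

lemma semifocal_sq_lt:
  fixes l :: real assumes "0 \<le> l" "l < b" shows "a\<^sup>2 - b\<^sup>2 < a\<^sup>2 - l\<^sup>2"
  using assms by (simp add: power_strict_mono)

lemma k_lam_sq:
  fixes l :: real assumes "0 \<le> l" "l < b"
  shows "(k_lam a b l)\<^sup>2 = (a\<^sup>2 - b\<^sup>2) / (a\<^sup>2 - l\<^sup>2)"
  unfolding k_lam_def using semifocal_sq_pos semifocal_sq_lt[OF assms] by simp

lemma k_lam_nonneg:
  fixes l :: real assumes "0 \<le> l" "l < b" shows "0 \<le> k_lam a b l"
  unfolding k_lam_def using semifocal_sq_pos semifocal_sq_lt[OF assms] by simp

lemma k_lam_less_1:
  fixes l :: real assumes "0 \<le> l" "l < b" shows "k_lam a b l < 1"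
  unfolding k_lam_def using semifocal_sq_pos semifocal_sq_lt[OF assms] by simp

lemma k_lam_mono:
  fixes l1 l2 :: real assumes "0 \<le> l1" "l1 \<le> l2" "l2 < b"
  shows "k_lam a b l1 \<le> k_lam a b l2"
proof -
  have "l1\<^sup>2 \<le> l2\<^sup>2" using assms by (intro power_mono) auto
  hence "(a\<^sup>2 - b\<^sup>2) / (a\<^sup>2 - l1\<^sup>2) \<le> (a\<^sup>2 - b\<^sup>2) / (a\<^sup>2 - l2\<^sup>2)"
    using semifocal_sq_pos semifocal_sq_lt[of l1] semifocal_sq_lt[of l2] assms
    by (intro divide_left_mono mult_pos_pos) auto
  thus ?thesis unfolding k_lam_def by simp
qed

lemma k_lam_0: "k_lam a b 0 = ecc0 a b"
  unfolding k_lam_def ecc0_def using ellipse by (simp add: diff_divide_distrib)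

lemma ecc0_pos: "0 < ecc0 a b"
  unfolding k_lam_0[symmetric] k_lam_def using semifocal_sq_pos ellipse by simp

lemma sqrt_one_minus_k_lam_sq:
  fixes l :: real assumes "0 \<le> l" "l < b"
  shows "sqrt (1 - (k_lam a b l)\<^sup>2) = sqrt (b\<^sup>2 - l\<^sup>2) / sqrt (a\<^sup>2 - l\<^sup>2)"
proof -
  have "1 - (k_lam a b l)\<^sup>2 = (b\<^sup>2 - l\<^sup>2) / (a\<^sup>2 - l\<^sup>2)"
    unfolding k_lam_sq[OF assms] using semifocal_sq_pos semifocal_sq_lt[OF assms]
    by (simp add: field_simps)
  thus ?thesis by (simp add: real_sqrt_divide)
qed

text \<open>The amplitude complementary to \<open>arcsin (\<lambda>/b)\<close> for the modulus \<open>k\<^sub>\<lambda>\<close>,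
  i.e. \<open>tan \<psi>\<^sub>\<lambda> \<cdot> tan (arcsin (\<lambda>/b)) \<cdot> \<surd>(1 - k\<^sub>\<lambda>\<^sup>2) = 1\<close>.\<close>

definition psi_lam :: "real \<Rightarrow> real" where
  "psi_lam l = arctan (sqrt (a\<^sup>2 - l\<^sup>2) / l)"

lemma psi_lam_pos: "0 < l \<Longrightarrow> l < b \<Longrightarrow> 0 < psi_lam l"
  unfolding psi_lam_def using semifocal_sq_lt[of l] semifocal_sq_pos by simp

lemma psi_lam_less: "psi_lam l < pi/2"
  unfolding psi_lam_def by (rule arctan_ubound)

lemma psi_lam_strict_antimono:
  fixes l1 l2 :: real assumes "0 < l1" "l1 < l2" "l2 < b"
  shows "psi_lam l2 < psi_lam l1"
proof -
  have "0 < sqrt (a\<^sup>2 - l1\<^sup>2)" using semifocal_sq_lt[of l1] semifocal_sq_pos assms by simp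
  moreover have "sqrt (a\<^sup>2 - l2\<^sup>2) \<le> sqrt (a\<^sup>2 - l1\<^sup>2)" using assms by (simp add: power_mono)
  ultimately have "sqrt (a\<^sup>2 - l2\<^sup>2) / l2 < sqrt (a\<^sup>2 - l1\<^sup>2) / l1"
    using assms by (meson divide_right_mono divide_strict_left_mono le_less_trans less_imp_le
        mult_pos_pos order_le_less_trans)
  thus ?thesis unfolding psi_lam_def by (rule arctan_monotone)
qed

lemma arcsin_eq_complementary_amplitude:
  fixes l :: real assumes "0 < l" "l < b"
  shows "arcsin (l / b) = pi/2 - arctan (sqrt (1 - (k_lam a b l)\<^sup>2) * tan (psi_lam l))"
proof -
  have A: "0 < sqrt (a\<^sup>2 - l\<^sup>2)" using semifocal_sq_lt[of l] semifocal_sq_pos assms by simp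
  have B: "0 < sqrt (b\<^sup>2 - l\<^sup>2)" using assms by (simp add: power_strict_mono)
  have prod: "sqrt (1 - (k_lam a b l)\<^sup>2) * tan (psi_lam l) = 1 / (l / sqrt (b\<^sup>2 - l\<^sup>2))"
    unfolding psi_lam_def tan_arctan sqrt_one_minus_k_lam_sq[OF less_imp_le[OF assms(1)] assms(2)]
    using A by simp
  have arcsin: "arcsin (l / b) = arctan (l / sqrt (b\<^sup>2 - l\<^sup>2))"
  proof -
    have "1 - (l / b)\<^sup>2 = (b\<^sup>2 - l\<^sup>2) / b\<^sup>2" using ellipse by (simp add: field_simps power_divide)
    hence "l / b / sqrt (1 - (l / b)\<^sup>2) = l / sqrt (b\<^sup>2 - l\<^sup>2)"
      using ellipse B by (simp add: real_sqrt_divide)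
    moreover have "-1 < l / b" "l / b < 1" using assms ellipse by (auto simp: field_simps)
    ultimately show ?thesis using arcsin_arctan by metis
  qed
  have "0 < l / sqrt (b\<^sup>2 - l\<^sup>2)" using assms B by simp
  hence "arctan (1 / (l / sqrt (b\<^sup>2 - l\<^sup>2))) = pi/2 - arctan (l / sqrt (b\<^sup>2 - l\<^sup>2))"
    using arctan_inverse[of "l / sqrt (b\<^sup>2 - l\<^sup>2)"] by simp
  thus ?thesis unfolding prod arcsin by linarith
qed

lemma omega_lam_eq:
  fixes l :: real assumes "0 < l" "l < b"
  defines "k \<equiv> k_lam a b l"
  shows "omega_lam a b l = (1 - ellint k (psi_lam l) / ellint k (pi/2)) / 2"
proof -
  have "pi/2 \<le> ellint k (pi/2)"
    unfolding k_def using assms by (intro ellint_pi_half_ge k_lam_nonneg k_lam_less_1) auto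
  hence "0 < ellint k (pi/2)" using pi_gt_zero by linarith
  have "0 \<le> arcsin (l / b)" using assms ellipse arcsin_le_mono[of 0 "l / b"] by simp
  hence "omega_lam a b l = ellint k (arcsin (l / b)) / (2 * ellint k (pi/2))"
    unfolding omega_lam_def k_def by (simp add: ellF_eq_ellint ellK_eq_ellint)
  also have "ellint k (arcsin (l / b)) = ellint k (pi/2) - ellint k (psi_lam l)"
    unfolding arcsin_eq_complementary_amplitude[OF assms(1,2)] k_def
    using ellint_complementary_amplitude[OF k_lam_nonneg k_lam_less_1
        less_imp_le[OF psi_lam_pos[OF assms(1,2)]] psi_lam_less, of l] assms
    by (simp add: eq_diff_eq)
  finally show ?thesis using \<open>0 < ellint k (pi/2)\<close> by (simp add: field_simps)
qed

lemma omega_lam_strict_mono: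
  fixes l1 l2 :: real assumes "0 < l1" "l1 < l2" "l2 < b"
  shows "omega_lam a b l1 < omega_lam a b l2"
proof -
  define k1 where "k1 = k_lam a b l1"
  define k2 where "k2 = k_lam a b l2"
  have k1: "0 \<le> k1" "k1 < 1" and k2: "0 \<le> k2" "k2 < 1"
    unfolding k1_def k2_def using assms k_lam_nonneg k_lam_less_1 by auto
  have "k1 \<le> k2" unfolding k1_def k2_def using assms by (intro k_lam_mono) auto
  define K1 where "K1 = ellint k1 (pi/2)"
  define K2 where "K2 = ellint k2 (pi/2)"
  have K1: "0 < K1" and K2: "0 < K2"
    unfolding K1_def K2_def using ellint_pi_half_ge[OF k1] ellint_pi_half_ge[OF k2] pi_gt_zero
    by linarith+
  have "ellint k2 (psi_lam l2) * K1 \<le> ellint k1 (psi_lam l2) * K2"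
    unfolding K1_def K2_def using psi_lam_pos[of l2] psi_lam_less[of l2] assms
    by (intro ellint_ratio_antimono k1 \<open>k1 \<le> k2\<close> k2) auto
  also have "\<dots> < ellint k1 (psi_lam l1) * K2"
    using ellint_strict_mono[OF k1 _ psi_lam_strict_antimono[OF assms]] psi_lam_pos[of l2] assms K2
    by simp
  finally have "ellint k2 (psi_lam l2) / K2 < ellint k1 (psi_lam l1) / K1"
    using K1 K2 by (simp add: field_simps)
  thus ?thesis
    using omega_lam_eq[of l1] omega_lam_eq[of l2] assms unfolding K1_def K2_def k1_def k2_def
    by simp
qed

lemma omega_lam_0: "omega_lam a b 0 = 0"
  unfolding omega_lam_def by (simp add: ellF_eq_ellint)

lemma continuous_on_k_lam:
  fixes L :: real assumes "L < b" shows "continuous_on {0..L} (k_lam a b)"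
proof -
  have "\<forall>x\<in>{0..L}. a\<^sup>2 - x\<^sup>2 \<noteq> 0" using semifocal_sq_lt semifocal_sq_pos assms by fastforce
  thus ?thesis unfolding k_lam_def[abs_def] by (auto intro!: continuous_intros)
qed

lemma continuous_on_omega_lam:
  fixes L :: real assumes "0 \<le> L" "L < b" shows "continuous_on {0..L} (omega_lam a b)"
proof -
  have k_bounds: "0 \<le> k_lam a b x \<and> k_lam a b x \<le> k_lam a b L" if "x \<in> {0..L}" for x
    using that assms k_lam_nonneg k_lam_mono by auto
  have arcsin_bounds: "0 \<le> arcsin (x / b) \<and> -1 \<le> x / b \<and> x / b \<le> 1" if "x \<in> {0..L}" for x
    using that assms ellipse arcsin_le_mono[of 0 "x / b"] by (auto simp: field_simps)
  have "continuous_on {0..L} (\<lambda>x. ellint (k_lam a b x) (arcsin (x / b)))"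
    by (rule continuous_on_ellint_comp[OF _ continuous_on_k_lam[OF assms(2)] k_lam_less_1[OF assms]])
      (use arcsin_bounds k_bounds ellipse in \<open>auto intro!: continuous_intros\<close>)
  moreover have "continuous_on {0..L} (\<lambda>x. ellint (k_lam a b x) (pi/2))"
    by (rule continuous_on_ellint_comp[OF _ continuous_on_k_lam[OF assms(2)] k_lam_less_1[OF assms]])
      (use k_bounds in \<open>auto intro!: continuous_intros\<close>)
  moreover have "ellint (k_lam a b x) (pi/2) \<noteq> 0" if "x \<in> {0..L}" for x
  proof -
    have "k_lam a b x < 1" using k_bounds[OF that] k_lam_less_1[OF assms] by linarith
    hence "pi/2 \<le> ellint (k_lam a b x) (pi/2)" using k_bounds[OF that] by (intro ellint_pi_half_ge) auto
    thus ?thesis using pi_gt_zero by linarith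
  qed
  ultimately have "continuous_on {0..L}
      (\<lambda>x. ellint (k_lam a b x) (arcsin (x / b)) / (2 * ellint (k_lam a b x) (pi/2)))"
    by (auto intro!: continuous_intros)
  thus ?thesis
    by (rule continuous_on_eq)
      (use arcsin_bounds in \<open>simp add: omega_lam_def ellF_eq_ellint ellK_eq_ellint\<close>)
qed

lemma ell_integrand_psi_lam:
  fixes l :: real assumes "0 < l" "l < b"
  shows "ell_integrand (k_lam a b l) (psi_lam l) = a / b"
proof -
  have A: "0 < a\<^sup>2 - l\<^sup>2" using semifocal_sq_lt[of l] semifocal_sq_pos assms by auto
  define T where "T = sqrt (a\<^sup>2 - l\<^sup>2) / l"
  have T2: "T\<^sup>2 = (a\<^sup>2 - l\<^sup>2) / l\<^sup>2" unfolding T_def using A by (simp add: power_divide)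
  have "(sin (psi_lam l))\<^sup>2 = T\<^sup>2 / (1 + T\<^sup>2)" unfolding psi_lam_def T_def[symmetric] sin_arctan
    by (simp add: power_divide add_pos_nonneg)
  also have "1 + T\<^sup>2 = a\<^sup>2 / l\<^sup>2" unfolding T2 using assms by (simp add: field_simps)
  also have "T\<^sup>2 / (a\<^sup>2 / l\<^sup>2) = (a\<^sup>2 - l\<^sup>2) / a\<^sup>2" unfolding T2 using assms by simp
  finally have "(k_lam a b l)\<^sup>2 * (sin (psi_lam l))\<^sup>2 = (a\<^sup>2 - b\<^sup>2) / a\<^sup>2"
    unfolding k_lam_sq[OF less_imp_le[OF assms(1)] assms(2)] using A by simp
  hence "1 - (k_lam a b l)\<^sup>2 * (sin (psi_lam l))\<^sup>2 = b\<^sup>2 / a\<^sup>2" using ellipse by (simp add: field_simps)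
  thus ?thesis unfolding ell_integrand_def using ellipse by (simp add: real_sqrt_divide)
qed

lemma omega_lam_ge_third: "\<exists>L. 0 < L \<and> L < b \<and> 1/3 \<le> omega_lam a b L"
proof -
  define M where "M = 3 * pi * a / (2 * b)"
  define \<epsilon> where "\<epsilon> = pi / 2 / sinh M"
  have "0 < M" unfolding M_def using ellipse by simp
  hence \<epsilon>0: "0 < \<epsilon>" unfolding \<epsilon>_def by simp
  define L where "L = sqrt (max (b\<^sup>2 / 4) (b\<^sup>2 - \<epsilon>\<^sup>2 * (a\<^sup>2 - b\<^sup>2)))"
  have L2: "L\<^sup>2 = max (b\<^sup>2 / 4) (b\<^sup>2 - \<epsilon>\<^sup>2 * (a\<^sup>2 - b\<^sup>2))" unfolding L_def
    by (rule real_sqrt_pow2) (simp add: le_max_iff_disj)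
  have L0: "0 < L" unfolding L_def using ellipse by (simp add: less_max_iff_disj)
  have "L\<^sup>2 < b\<^sup>2" unfolding L2 using \<epsilon>0 semifocal_sq_pos ellipse by simp
  hence Lb: "L < b" using L0 ellipse by (simp add: power_less_imp_less_base)
  define k where "k = k_lam a b L"
  have k: "0 \<le> k" "k < 1" unfolding k_def using L0 Lb k_lam_nonneg k_lam_less_1 by auto
  have "(b\<^sup>2 - L\<^sup>2) / (a\<^sup>2 - L\<^sup>2) \<le> (\<epsilon>\<^sup>2 * (a\<^sup>2 - b\<^sup>2)) / (a\<^sup>2 - b\<^sup>2)"
    using semifocal_sq_pos semifocal_sq_lt[of L] L0 Lb unfolding L2
    by (intro frac_le) auto
  hence "sqrt ((b\<^sup>2 - L\<^sup>2) / (a\<^sup>2 - L\<^sup>2)) \<le> \<epsilon>" using semifocal_sq_pos \<epsilon>0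
    by (simp add: real_le_lsqrt)
  hence k': "sqrt (1 - k\<^sup>2) \<le> \<epsilon>"
    unfolding k_def sqrt_one_minus_k_lam_sq[OF less_imp_le[OF L0] Lb] by (simp add: real_sqrt_divide)
  have "0 < sqrt (1 - k\<^sup>2)" using one_minus_square_pos[OF k] by simp
  hence "sinh M \<le> pi / 2 / sqrt (1 - k\<^sup>2)"
    using k' \<epsilon>0 \<open>0 < M\<close> unfolding \<epsilon>_def by (simp add: field_simps)
  hence "M \<le> arsinh (pi / 2 / sqrt (1 - k\<^sup>2))" by (metis arsinh_sinh_real arsinh_less_iff_real not_less)
  also have "\<dots> \<le> ellint k (pi/2)" by (rule ellint_pi_half_ge_arsinh[OF k])
  finally have K: "M \<le> ellint k (pi/2)" .
  have "ellint k (psi_lam L) \<le> psi_lam L * (a / b)"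
    using ellint_le_mul_integrand[OF k, of "psi_lam L"] psi_lam_pos[OF L0 Lb] psi_lam_less[of L]
    unfolding k_def ell_integrand_psi_lam[OF L0 Lb] by simp
  also have "\<dots> \<le> pi/2 * (a / b)" using psi_lam_less[of L] ellipse by (intro mult_right_mono) auto
  finally have "3 * ellint k (psi_lam L) \<le> ellint k (pi/2)" using K unfolding M_def by simp
  moreover have "0 < ellint k (pi/2)" using ellint_pi_half_ge[OF k] pi_gt_zero by linarith
  ultimately have "ellint k (psi_lam L) / ellint k (pi/2) \<le> 1/3" by (simp add: field_simps)
  hence "1/3 \<le> omega_lam a b L" using omega_lam_eq[OF L0 Lb] unfolding k_def by simp
  thus ?thesis using L0 Lb by blast
qed

lemma lam_q:
  fixes q :: nat assumes "3 \<le> q"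
  shows "0 < lam_q a b q" "lam_q a b q < b" "omega_lam a b (lam_q a b q) = 1 / real q"
proof -
  obtain L where L: "0 < L" "L < b" "1/3 \<le> omega_lam a b L" using omega_lam_ge_third by blast
  have "1 / real q \<le> 1/3" using assms by (simp add: field_simps)
  hence "omega_lam a b 0 \<le> 1 / real q" "1 / real q \<le> omega_lam a b L"
    using L by (auto simp: omega_lam_0)
  then obtain l where l: "0 \<le> l" "l \<le> L" "omega_lam a b l = 1 / real q"
    using IVT'[of "omega_lam a b" 0 "1 / real q" L] continuous_on_omega_lam[of L] L by auto
  have P: "0 < l \<and> l < b \<and> omega_lam a b l = 1 / real q"
    using l L assms omega_lam_0 by (cases "l = 0") auto
  moreover have "y = l" if "0 < y \<and> y < b \<and> omega_lam a b y = 1 / real q" for y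
    using omega_lam_strict_mono[of y l] omega_lam_strict_mono[of l y] that P
    by (cases y l rule: linorder_cases) auto
  ultimately have "lam_q a b q = l" unfolding lam_q_def by (rule the_equality)
  thus "0 < lam_q a b q" "lam_q a b q < b" "omega_lam a b (lam_q a b q) = 1 / real q" using P by auto
qed

lemma lam_q_le_lam_q_3:
  fixes q :: nat assumes "3 \<le> q" shows "lam_q a b q \<le> lam_q a b 3"
proof (rule ccontr)
  assume "\<not> lam_q a b q \<le> lam_q a b 3"
  hence "omega_lam a b (lam_q a b 3) < omega_lam a b (lam_q a b q)"
    using lam_q[OF assms] lam_q[of 3] by (intro omega_lam_strict_mono) auto
  thus False using lam_q[OF assms] lam_q[of 3] assms by (simp add: field_simps)
qed

lemma k_lam_sub_ecc0:
  fixes l :: real assumes "0 \<le> l" "l < b"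
  shows "0 \<le> k_lam a b l - ecc0 a b" "k_lam a b l - ecc0 a b \<le> l\<^sup>2 / (a\<^sup>2 * ecc0 a b)"
proof -
  define k where "k = k_lam a b l"
  define e where "e = ecc0 a b"
  have e0: "0 < e" unfolding e_def by (rule ecc0_pos)
  show ke: "0 \<le> k_lam a b l - ecc0 a b"
    using k_lam_mono[of 0 l] assms unfolding k_lam_0 by simp
  have e2: "e\<^sup>2 = (a\<^sup>2 - b\<^sup>2) / a\<^sup>2"
    unfolding e_def k_lam_0[symmetric] using k_lam_sq[of 0] ellipse by simp
  have "k\<^sup>2 - e\<^sup>2 = (a\<^sup>2 - b\<^sup>2) * l\<^sup>2 / ((a\<^sup>2 - l\<^sup>2) * a\<^sup>2)"
    unfolding k_def k_lam_sq[OF assms] e2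
    using semifocal_sq_lt[OF assms] semifocal_sq_pos ellipse by (simp add: field_simps)
  also have "\<dots> \<le> (a\<^sup>2 - l\<^sup>2) * l\<^sup>2 / ((a\<^sup>2 - l\<^sup>2) * a\<^sup>2)"
    using semifocal_sq_lt[OF assms] semifocal_sq_pos by (intro divide_right_mono mult_right_mono) auto
  also have "\<dots> = l\<^sup>2 / a\<^sup>2" using semifocal_sq_lt[OF assms] semifocal_sq_pos by simp
  finally have sq_diff: "k\<^sup>2 - e\<^sup>2 \<le> l\<^sup>2 / a\<^sup>2" .
  have "(k - e) * e \<le> (k - e) * (k + e)"
    using ke e0 unfolding k_def e_def by (intro mult_left_mono) auto
  also have "\<dots> = k\<^sup>2 - e\<^sup>2" by (simp add: power2_eq_square algebra_simps)
  finally have "(k - e) * e \<le> l\<^sup>2 / a\<^sup>2" using sq_diff by linarith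
  hence "k - e \<le> l\<^sup>2 / a\<^sup>2 / e" by (subst pos_le_divide_eq[OF e0])
  thus "k_lam a b l - ecc0 a b \<le> l\<^sup>2 / (a\<^sup>2 * ecc0 a b)"
    unfolding k_def e_def by simp
qed

text \<open>From \<open>1/q = \<omega>\<^sub>\<lambda> = F(arcsin(\<lambda>/b);k)/(2K(k))\<close> and
  \<open>F(\<phi>;k) \<ge> \<phi> \<ge> sin \<phi>\<close>.\<close>

lemma lam_le:
  fixes l \<kappa> :: real and q :: nat
  assumes "0 < l" "l < b" "omega_lam a b l = 1 / real q" "0 < q" "k_lam a b l \<le> \<kappa>" "\<kappa> < 1"
  shows "l \<le> 2 * b * K_bound \<kappa> / real q"
proof -
  define k where "k = k_lam a b l"
  have k: "0 \<le> k" "k < 1" unfolding k_def using assms k_lam_nonneg k_lam_less_1 by auto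
  have lb: "0 \<le> l / b" "l / b \<le> 1" using assms ellipse by auto
  hence asn: "0 \<le> arcsin (l / b)" using arcsin_le_mono[of 0 "l / b"] by simp
  have "l / b = sin (arcsin (l / b))" using lb by simp
  also have "\<dots> \<le> arcsin (l / b)" using asn by (rule sin_x_le_x)
  also have "\<dots> \<le> ellint k (arcsin (l / b))" using asn by (intro ellint_ge k)
  finally have num: "l / b \<le> ellint k (arcsin (l / b))" .
  have K: "pi/2 \<le> ellint k (pi/2)" "ellint k (pi/2) \<le> K_bound \<kappa>"
    using ellint_pi_half_ge[OF k] ellint_pi_half_le[OF k(1) _ assms(6)] assms(5)
    unfolding k_def by auto
  have "l / b / (2 * K_bound \<kappa>) \<le> ellint k (arcsin (l / b)) / (2 * ellint k (pi/2))"
    using num K lb pi_gt_zero by (intro frac_le) linarith+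
  also have "\<dots> = 1 / real q"
    using assms(3) asn unfolding omega_lam_def k_def by (simp add: ellF_eq_ellint ellK_eq_ellint)
  finally show ?thesis using K assms(4) ellipse pi_gt_zero by (simp add: field_simps)
qed

text \<open>All \<open>k\<^sub>q\<close> stay below \<open>\<kappa> = k\<^sub>\<lambda>\<^sub>3 < 1\<close>, where the elliptic integrals are
  uniformly Lipschitz in the modulus.\<close>

lemma k_q_estimate:
  "\<exists>C \<kappa>. \<kappa> < 1 \<and> 0 \<le> C \<and> (\<forall>q::nat. 3 \<le> q \<longrightarrow>
     ecc0 a b \<le> k_q a b q \<and> k_q a b q \<le> \<kappa> \<and> \<bar>k_q a b q - ecc0 a b\<bar> \<le> C / (real q)\<^sup>2)"
proof -
  define \<kappa> where "\<kappa> = k_lam a b (lam_q a b 3)"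
  have \<kappa>: "\<kappa> < 1" unfolding \<kappa>_def using lam_q[of 3] k_lam_less_1 by simp
  define e where "e = ecc0 a b"
  have e0: "0 < e" unfolding e_def by (rule ecc0_pos)
  define C where "C = (2 * b * K_bound \<kappa>)\<^sup>2 / (a\<^sup>2 * e)"
  have "e \<le> k_q a b q \<and> k_q a b q \<le> \<kappa> \<and> \<bar>k_q a b q - e\<bar> \<le> C / (real q)\<^sup>2" if q: "3 \<le> q" for q
  proof -
    define l where "l = lam_q a b q"
    have l: "0 < l" "l < b" "omega_lam a b l = 1 / real q" unfolding l_def using lam_q[OF q] by auto
    have k\<kappa>: "k_lam a b l \<le> \<kappa>"
      unfolding \<kappa>_def l_def using lam_q_le_lam_q_3[OF q] lam_q[OF q] lam_q[of 3] by (intro k_lam_mono) auto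
    have "l\<^sup>2 \<le> (2 * b * K_bound \<kappa> / real q)\<^sup>2"
      using lam_le[OF l _ k\<kappa> \<kappa>] q l by (intro power_mono) auto
    hence "l\<^sup>2 / (a\<^sup>2 * e) \<le> (2 * b * K_bound \<kappa> / real q)\<^sup>2 / (a\<^sup>2 * e)"
      using e0 by (intro divide_right_mono) auto
    also have "\<dots> = C / (real q)\<^sup>2" unfolding C_def by (simp add: power_divide)
    finally have "l\<^sup>2 / (a\<^sup>2 * e) \<le> C / (real q)\<^sup>2" .
    thus ?thesis unfolding k_q_def l_def[symmetric] e_def
      using k_lam_sub_ecc0[of l] k\<kappa> l by auto
  qed
  moreover have "0 \<le> C" unfolding C_def using e0 by simp
  ultimately show ?thesis using \<kappa> unfolding e_def by blast
qed

end

lemma ellint_cross_diff_le: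
  fixes e k \<kappa> \<phi> :: real
  assumes "0 \<le> e" "e \<le> \<kappa>" "0 \<le> k" "k \<le> \<kappa>" "\<kappa> < 1" "0 \<le> \<phi>"
    and bound: "ellint e \<phi> \<le> 4 * K_bound \<kappa>"
  shows "\<bar>ellint k \<phi> * ellint e (pi/2) - ellint e \<phi> * ellint k (pi/2)\<bar>
    \<le> 4 * K_bound \<kappa> * (K_bound \<kappa> + pi/2) * ell_lipschitz_const \<kappa> * \<bar>k - e\<bar>"
proof -
  have e1: "e < 1" and \<kappa>0: "0 \<le> \<kappa>" using assms by linarith+
  define Kb where "Kb = K_bound \<kappa>"
  define LD where "LD = ell_lipschitz_const \<kappa> * \<bar>k - e\<bar>"
  define Ge where "Ge = ellint e \<phi>"
  define Gk where "Gk = ellint k \<phi>"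
  define Ke where "Ke = ellint e (pi/2)"
  define Kk where "Kk = ellint k (pi/2)"
  have Ke: "pi/2 \<le> Ke" "Ke \<le> Kb"
    unfolding Ke_def Kb_def using assms ellint_pi_half_ge ellint_pi_half_le by auto
  hence Kb: "0 \<le> Ke" "0 \<le> Kb" using pi_gt_zero by linarith+
  have LD: "0 \<le> LD"
    unfolding LD_def ell_lipschitz_const_def using one_minus_square_pos[OF \<kappa>0 assms(5)] by simp
  have Ge: "0 \<le> Ge" "\<phi> \<le> Ge" "Ge \<le> 4 * Kb"
    unfolding Ge_def Kb_def using ellint_ge[OF assms(1) e1 assms(6)] assms by auto
  have "\<bar>Gk - Ge\<bar> \<le> \<phi> * LD"
    unfolding LD_def Gk_def Ge_def by (rule ellint_lipschitz_modulus[OF assms(3,4,1,2,5,6)])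
  also have "\<dots> \<le> 4 * Kb * LD" using Ge LD by (intro mult_right_mono) auto
  finally have diff_G: "\<bar>Gk - Ge\<bar> \<le> 4 * Kb * LD" .
  have diff_K: "\<bar>Ke - Kk\<bar> \<le> pi/2 * LD"
    unfolding LD_def Ke_def Kk_def using ellint_lipschitz_modulus[OF assms(1-5), of "pi/2"]
    by (simp add: abs_minus_commute)
  have "\<bar>Gk * Ke - Ge * Kk\<bar> = \<bar>(Gk - Ge) * Ke + Ge * (Ke - Kk)\<bar>"
    by (simp add: algebra_simps)
  also have "\<dots> \<le> \<bar>Gk - Ge\<bar> * Ke + Ge * \<bar>Ke - Kk\<bar>"
    using abs_triangle_ineq[of "(Gk - Ge) * Ke" "Ge * (Ke - Kk)"] Kb Ge by (simp add: abs_mult)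
  also have "\<dots> \<le> 4 * Kb * LD * Kb + 4 * Kb * (pi/2 * LD)"
    using diff_G diff_K Ke Kb LD Ge by (intro add_mono mult_mono) auto
  finally show ?thesis unfolding Gk_def Ge_def Kk_def Ke_def Kb_def LD_def
    by (simp add: algebra_simps)
qed

lemma ellint_ratio_lipschitz:
  fixes e k \<kappa> \<phi> :: real
  assumes "0 \<le> e" "e \<le> \<kappa>" "0 \<le> k" "k \<le> \<kappa>" "\<kappa> < 1" "0 \<le> \<phi>"
    and "ellint e \<phi> \<le> 4 * K_bound \<kappa>"
  shows "\<bar>ellint k \<phi> / ellint k (pi/2) - ellint e \<phi> / ellint e (pi/2)\<bar>
    \<le> 16 / pi\<^sup>2 * K_bound \<kappa> * (K_bound \<kappa> + pi/2) * ell_lipschitz_const \<kappa> * \<bar>k - e\<bar>"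
proof -
  define Ke where "Ke = ellint e (pi/2)"
  define Kk where "Kk = ellint k (pi/2)"
  have K2: "pi/2 \<le> Ke" "pi/2 \<le> Kk"
    unfolding Ke_def Kk_def using assms ellint_pi_half_ge by auto
  hence K0: "0 < Ke" "0 < Kk" using pi_gt_zero by linarith+
  moreover have "pi/2 * (pi/2) \<le> Kk * Ke"
    using mult_mono[OF K2(2) K2(1)] K0 by simp
  ultimately have K: "0 < Ke" "0 < Kk" "pi/2 * (pi/2) \<le> Kk * Ke" by simp_all
  hence "\<bar>ellint k \<phi> / Kk - ellint e \<phi> / Ke\<bar> = \<bar>ellint k \<phi> * Ke - ellint e \<phi> * Kk\<bar> / (Kk * Ke)"
    by (simp add: field_simps abs_divide)
  also have "\<dots> \<le> \<bar>ellint k \<phi> * Ke - ellint e \<phi> * Kk\<bar> / (pi/2 * (pi/2))"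
    using K by (intro divide_left_mono) simp_all
  also have "\<dots> \<le> 4 * K_bound \<kappa> * (K_bound \<kappa> + pi/2) * ell_lipschitz_const \<kappa> * \<bar>k - e\<bar>
      / (pi/2 * (pi/2))"
    unfolding Ke_def Kk_def using ellint_cross_diff_le[OF assms] by (intro divide_right_mono) auto
  finally show ?thesis unfolding Ke_def Kk_def by (simp add: power2_eq_square)
qed

lemma amplitude_rescaling_estimate:
  fixes e k \<kappa> \<xi> :: real
  assumes "0 \<le> e" "e \<le> \<kappa>" "0 \<le> k" "k \<le> \<kappa>" "\<kappa> < 1" "0 \<le> \<xi>" "\<xi> \<le> 2 * pi"
  shows "\<bar>2 * pi / (4 * ellK k) * ellF (jam (4 * ellK e / (2 * pi) * \<xi>) e) k - \<xi>\<bar>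
    \<le> 8 / pi * K_bound \<kappa> * (K_bound \<kappa> + pi/2) * ell_lipschitz_const \<kappa> * \<bar>k - e\<bar>"
proof -
  have e1: "e < 1" using assms by linarith
  define Ke where "Ke = ellint e (pi/2)"
  have Ke: "pi/2 \<le> Ke" "Ke \<le> K_bound \<kappa>"
    unfolding Ke_def using assms ellint_pi_half_ge ellint_pi_half_le by auto
  define u where "u = 4 * Ke / (2 * pi) * \<xi>"
  have Ke0: "0 < Ke" using Ke pi_gt_zero by linarith
  have "u = 2 * (Ke * \<xi>) / pi" unfolding u_def by simp
  also have "\<dots> \<le> 2 * (K_bound \<kappa> * (2 * pi)) / pi"
    using Ke Ke0 assms by (intro divide_right_mono mult_left_mono mult_mono) auto
  finally have u: "0 \<le> u" "u \<le> 4 * K_bound \<kappa>"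
    unfolding u_def using Ke0 assms by simp_all
  define \<phi> where "\<phi> = jam u e"
  have \<phi>: "0 \<le> \<phi>" "ellint e \<phi> = u" unfolding \<phi>_def using jam_ellint[OF assms(1) e1 u(1)] by auto
  have xi_eq: "\<xi> = pi/2 * (ellint e \<phi> / Ke)" unfolding \<phi>(2) u_def using Ke0 by (simp add: field_simps)
  have "jam (4 * ellK e / (2 * pi) * \<xi>) e = \<phi>" unfolding \<phi>_def u_def Ke_def ellK_eq_ellint ..
  hence "2 * pi / (4 * ellK k) * ellF (jam (4 * ellK e / (2 * pi) * \<xi>) e) k - \<xi>
      = pi/2 * (ellint k \<phi> / ellint k (pi/2) - ellint e \<phi> / ellint e (pi/2))"
    unfolding ellK_eq_ellint Ke_def[symmetric] using ellF_eq_ellint[OF \<phi>(1)] xi_eq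
    by (simp add: right_diff_distrib)
  hence "\<bar>2 * pi / (4 * ellK k) * ellF (jam (4 * ellK e / (2 * pi) * \<xi>) e) k - \<xi>\<bar>
      = pi/2 * \<bar>ellint k \<phi> / ellint k (pi/2) - ellint e \<phi> / ellint e (pi/2)\<bar>"
    by (simp only: abs_mult abs_of_pos[OF pi_half_gt_zero])
  also have "\<dots> \<le> pi/2 * (16 / pi\<^sup>2 * K_bound \<kappa> * (K_bound \<kappa> + pi/2) * ell_lipschitz_const \<kappa> * \<bar>k - e\<bar>)"
    using ellint_ratio_lipschitz[OF assms(1-5) \<phi>(1)] \<phi> u by (intro mult_left_mono) auto
  also have "\<dots> = 8 / pi * K_bound \<kappa> * (K_bound \<kappa> + pi/2) * ell_lipschitz_const \<kappa> * \<bar>k - e\<bar>"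
    by (simp add: power2_eq_square)
  finally show ?thesis .
qed

lemma xi_q_phi_inf_eq:
  "xi_q a b q (phi_inf a b \<xi>)
     = 2 * pi / (4 * ellK (k_q a b q)) * ellF (jam (4 * ellK (ecc0 a b) / (2 * pi) * \<xi>) (ecc0 a b)) (k_q a b q)"
  unfolding xi_q_def phi_inf_def ..

definition quadratic_estimates :: "real \<Rightarrow> real \<Rightarrow> real \<Rightarrow> bool" where
  "quadratic_estimates a b C \<longleftrightarrow> (\<forall>q::nat. q \<ge> 3 \<longrightarrow>
     (\<forall>\<xi>. 0 \<le> \<xi> \<and> \<xi> < 2 * pi \<longrightarrow> \<bar>xi_q a b q (phi_inf a b \<xi>) - \<xi>\<bar> \<le> C / (real q)\<^sup>2) \<and>
     \<bar>k_q a b q - ecc0 a b\<bar> \<le> C / (real q)\<^sup>2)"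

lemma ellipse_quadratic_estimates:
  fixes a b :: real assumes "0 < b" "b < a"
  shows "\<exists>C\<ge>0. quadratic_estimates a b C"
proof -
  obtain C \<kappa> where \<kappa>: "\<kappa> < 1" and C: "0 \<le> C" and k_q: "\<And>q::nat. 3 \<le> q \<Longrightarrow>
      ecc0 a b \<le> k_q a b q \<and> k_q a b q \<le> \<kappa> \<and> \<bar>k_q a b q - ecc0 a b\<bar> \<le> C / (real q)\<^sup>2"
    using k_q_estimate[OF assms] by blast
  have e: "0 \<le> ecc0 a b" using ecc0_pos[OF assms] by simp
  define M where "M = 8 / pi * K_bound \<kappa> * (K_bound \<kappa> + pi/2) * ell_lipschitz_const \<kappa>"
  have "0 \<le> \<kappa>" using k_q[of 3] e by linarith
  hence "0 < 1 - \<kappa>\<^sup>2" using \<kappa> by (rule one_minus_square_pos)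
  hence "0 \<le> K_bound \<kappa>" "0 \<le> ell_lipschitz_const \<kappa>" unfolding K_bound_def ell_lipschitz_const_def by simp_all
  hence M: "0 \<le> M" unfolding M_def by simp
  define C' where "C' = max C (M * C)"
  have C': "C / (real q)\<^sup>2 \<le> C' / (real q)\<^sup>2" "M * C / (real q)\<^sup>2 \<le> C' / (real q)\<^sup>2" for q :: nat
    unfolding C'_def by (simp_all add: divide_right_mono)
  have "\<bar>xi_q a b q (phi_inf a b \<xi>) - \<xi>\<bar> \<le> C' / (real q)\<^sup>2"
    if q: "3 \<le> q" and \<xi>: "0 \<le> \<xi>" "\<xi> < 2 * pi" for q :: nat and \<xi>
  proof -
    note k = k_q[OF q]
    have "\<bar>xi_q a b q (phi_inf a b \<xi>) - \<xi>\<bar> \<le> M * \<bar>k_q a b q - ecc0 a b\<bar>"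
      unfolding xi_q_phi_inf_eq M_def
      by (rule amplitude_rescaling_estimate) (use k e \<kappa> \<xi> in linarith)+
    also have "\<dots> \<le> M * (C / (real q)\<^sup>2)" using k M by (intro mult_left_mono) auto
    finally show ?thesis using C'(2)[of q] by simp
  qed
  moreover have "\<bar>k_q a b q - ecc0 a b\<bar> \<le> C' / (real q)\<^sup>2" if "3 \<le> q" for q :: nat
    using k_q[OF that] C'(1)[of q] by linarith
  moreover have "0 \<le> C'" unfolding C'_def using C by simp
  ultimately show ?thesis unfolding quadratic_estimates_def by blast
qed

lemma circle_k_q_ecc0:
  fixes a :: real assumes "0 < a" shows "k_q a a q = 0" "ecc0 a a = 0"
  unfolding k_q_def k_lam_def ecc0_def using assms by simp_all

lemma circle_xi_q:
  fixes a \<xi> :: real assumes "0 < a" "0 \<le> \<xi>" "\<xi> \<le> 2 * pi"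
  shows "xi_q a a q (phi_inf a a \<xi>) = \<xi>"
  using amplitude_rescaling_estimate[of 0 0 0 \<xi>] assms
  unfolding xi_q_phi_inf_eq circle_k_q_ecc0[OF assms(1)] by simp

lemma ecc0_eq_0_iff:
  fixes a b :: real assumes "0 < b" "b \<le> a" shows "ecc0 a b = 0 \<longleftrightarrow> b = a"
proof -
  have "ecc0 a b = 0 \<longleftrightarrow> b\<^sup>2 / a\<^sup>2 = 1" unfolding ecc0_def by simp
  also have "\<dots> \<longleftrightarrow> b\<^sup>2 = a\<^sup>2" using assms by auto
  also have "\<dots> \<longleftrightarrow> b = a" using assms by (auto simp: power2_eq_iff_nonneg)
  finally show ?thesis .
qed

lemma semifocal_eq_mult_ecc0:
  fixes a b :: real assumes "0 < b" "b \<le> a" shows "semifocal a b = a * ecc0 a b"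
proof -
  have "a * ecc0 a b = sqrt (a\<^sup>2 * (1 - b\<^sup>2 / a\<^sup>2))"
    unfolding ecc0_def using assms by (simp add: real_sqrt_mult)
  also have "a\<^sup>2 * (1 - b\<^sup>2 / a\<^sup>2) = a\<^sup>2 - b\<^sup>2" using assms by (simp add: field_simps)
  finally show ?thesis unfolding semifocal_def by simp
qed

lemma ellipse_eq_of_ecc0_semifocal:
  fixes a b a' b' :: real
  assumes "0 < b" "b \<le> a" "0 < b'" "b' \<le> a'" "ecc0 a b \<noteq> 0"
    and ecc0: "ecc0 a' b' = ecc0 a b" and semifocal: "semifocal a' b' = semifocal a b"
  shows "a' = a \<and> b' = b"
proof -
  have "a' * ecc0 a b = a * ecc0 a b"
    using semifocal semifocal_eq_mult_ecc0[OF assms(1,2)] semifocal_eq_mult_ecc0[OF assms(3,4)]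
    unfolding ecc0 by simp
  hence a: "a' = a" using assms(5) by simp
  have "b\<^sup>2 \<le> a\<^sup>2" "b'\<^sup>2 \<le> a'\<^sup>2" using assms by (simp_all add: power_mono)
  hence "a'\<^sup>2 - b'\<^sup>2 = a\<^sup>2 - b\<^sup>2" using semifocal unfolding semifocal_def by simp
  thus ?thesis using a assms(1,3) by (simp add: power2_eq_iff_nonneg)
qed

lemma circle_quadratic_estimates:
  fixes a C :: real assumes "0 < a" "0 \<le> C" shows "quadratic_estimates a a C"
  unfolding quadratic_estimates_def circle_k_q_ecc0[OF assms(1)]
  using circle_xi_q[OF assms(1)] assms(2) by simp

lemma quadratic_estimates_exist:
  fixes a b :: real assumes "0 < b" "b \<le> a" shows "\<exists>C\<ge>0. quadratic_estimates a b C"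
  using ellipse_quadratic_estimates[OF assms(1)] circle_quadratic_estimates[of a 0] assms
  by (cases "b = a") auto

theorem lemma9:
  fixes e c :: real
  shows "\<exists>C. \<forall>a b. 0 < b \<and> b \<le> a \<and> ecc0 a b = e \<and> semifocal a b = c \<longrightarrow>
           (\<forall>q::nat. q \<ge> 3 \<longrightarrow>
              (\<forall>xi. 0 \<le> xi \<and> xi < 2 * pi \<longrightarrow>
                  \<bar>xi_q a b q (phi_inf a b xi) - xi\<bar> \<le> C / (real q)\<^sup>2) \<and>
              \<bar>k_q a b q - ecc0 a b\<bar> \<le> C / (real q)\<^sup>2)"
proof (cases "\<exists>a0 b0. 0 < b0 \<and> b0 \<le> a0 \<and> ecc0 a0 b0 = e \<and> semifocal a0 b0 = c")
  case True
  then obtain a0 b0 where ab0: "0 < b0" "b0 \<le> a0" "ecc0 a0 b0 = e" "semifocal a0 b0 = c" by blast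
  then obtain C where C: "0 \<le> C" "quadratic_estimates a0 b0 C" using quadratic_estimates_exist by blast
  have "quadratic_estimates a b C" if ab: "0 < b" "b \<le> a" "ecc0 a b = e" "semifocal a b = c" for a b
  proof (cases "b = a")
    case True
    thus ?thesis using circle_quadratic_estimates ab C by simp
  next
    case False
    hence "ecc0 a b \<noteq> 0" using ecc0_eq_0_iff[OF ab(1,2)] by simp
    hence "a0 = a \<and> b0 = b" using ellipse_eq_of_ecc0_semifocal[OF ab(1,2) ab0(1,2)] ab ab0 by simp
    thus ?thesis using C by simp
  qed
  thus ?thesis unfolding quadratic_estimates_def by blast
qed blast

end
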